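(* Let $0\le\beta_1\le\dots\le\beta_n$ be reals and $\ell\in\{1,\dots,n\}$. Then: 1. For each integer $d\ge0$ there is an $(\ell,\frac{2d}{\ell})$-set $I$ with $|I|=2d$. 2. For each integer $h$ with $0\le h\le\frac{\ell+1}{2}$ there is an $(\ell,1-\frac{2h}{\ell(\ell+1)})$-set $I$ with $\ell-1\le|I|\le\ell$. 3. For each integer $k\ge1$ and each $h\in\{0,1,\dots,\ell\}$ there is an $(\ell,k+\frac{2h}{\ell(\ell+1)})$-set $I$ with $k\ell+\lfloor\frac{2h}{\ell+1}\rfloor\le|I|\le k\ell+\lceil\frac{2h}{\ell+1}\rceil$. 4. For each integer $d\ge1$ and each $h\in\{0,1,\dots,\ell\}$ there is an $(\ell,\frac{2d}{\ell}+\frac{2h}{\ell(\ell+1)})$-set $I$ with $|I|\le 2d+2$. 5. If $\ell\le n-1$, then for each integer $d\ge0$ there is an $\ell$-set $I$ with $|I|=2d$, $\Sigma(I)\ge\ell d$, and $\sigma(I,\ell)\le\frac{2d\,t_{\ell+1}}{\ell+1}$.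
   Context: Set $\beta_0=0$. For $\ell=1,\dots,n$, let $t_\ell=\sum_{i=1}^{\ell}\beta_{n-\ell+i}$, the sum of the $\ell$ largest $\beta_i$. An $\ell$-set is a finite multiset of elements of $\{0,1,\dots,\ell\}$. For a multiset $I$, $|I|$ is its cardinality and $\Sigma(I)$ the sum of its elements, both counting multiplicity. For an $\ell$-set $I$, $\sigma(I,\ell)=\sum_{i\in I}\beta_{n-\ell+i}$, counting multiplicity. For a real $q>0$, an $(\ell,q)$-set is an $\ell$-set $I$ with $\Sigma(I)\ge\frac{q\ell(\ell+1)}2$ and $\sigma(I,\ell)\le q\,t_\ell$. *)

theory Defs
  imports "HOL-Analysis.Analysis" "HOL-Library.Multiset"
begin

(* beta is given on indices 1..n; the convention beta_0 = 0 is built in *)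
definition bt :: "(nat \<Rightarrow> real) \<Rightarrow> nat \<Rightarrow> real" where
  "bt \<beta> i = (if i = 0 then 0 else \<beta> i)"

(* t_l = sum of the l largest beta_i *)
definition tl_sum :: "(nat \<Rightarrow> real) \<Rightarrow> nat \<Rightarrow> nat \<Rightarrow> real" where
  "tl_sum \<beta> n l = (\<Sum>i=1..l. bt \<beta> (n - l + i))"

definition is_lset :: "nat \<Rightarrow> nat multiset \<Rightarrow> bool" where
  "is_lset l I \<longleftrightarrow> set_mset I \<subseteq> {0..l}"

definition Sig :: "nat multiset \<Rightarrow> nat" where
  "Sig I = sum_mset I"

definition sigma_l :: "(nat \<Rightarrow> real) \<Rightarrow> nat \<Rightarrow> nat multiset \<Rightarrow> nat \<Rightarrow> real" where
  "sigma_l \<beta> n I l = (\<Sum>i\<in>#I. bt \<beta> (n - l + i))"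

definition is_lqset :: "(nat \<Rightarrow> real) \<Rightarrow> nat \<Rightarrow> nat \<Rightarrow> real \<Rightarrow> nat multiset \<Rightarrow> bool" where
  "is_lqset \<beta> n l q I \<longleftrightarrow> is_lset l I \<and>
     real (Sig I) \<ge> q * real l * (real l + 1) / 2 \<and>
     sigma_l \<beta> n I l \<le> q * tl_sum \<beta> n l"

end

theory Submission
  imports Defs
begin

text \<open>Each construction selects, from a family of candidate multisets with the same \<open>\<Sigma>\<close>, one whose
  \<open>\<sigma>\<close> is at most the average over the family. In parts 1, 4 and 5 the candidates are built from
  pairs \<open>{i, c - i}\<close>, and summing \<open>\<sigma>\<close> over all such pairs counts each relevant \<open>\<beta>\<close> twice.
  In parts 2 and 3 the ideal multiset is fractional: it should contain \<open>q(\<ell> + 1 - m)\<close> elements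
  \<open>\<ge> m\<close>. Rounding this profile up exactly where the increments of \<open>\<sigma>\<close> are cheapest costs at
  most the fractional average, and since \<open>\<Sigma>\<close>, \<open>\<sigma>\<close> and \<open>t\<^sub>\<ell>\<close> are all linear in the profile
  (summation by parts) this gives \<open>\<sigma>(I,\<ell>) \<le> q t\<^sub>\<ell>\<close>.\<close>

lemma exists_le_of_sum_le:
  fixes f :: "'a \<Rightarrow> real"
  assumes "finite A" "A \<noteq> {}" "sum f A \<le> real (card A) * c"
  obtains x where "x \<in> A" "f x \<le> c"
proof -
  have "\<not> (\<forall>x\<in>A. c < f x)"
  proof
    assume "\<forall>x\<in>A. c < f x"
    then have "(\<Sum>x\<in>A. c) < sum f A"
      using assms(1,2) by (intro sum_strict_mono) auto
    with assms(3) show False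
      by simp
  qed
  then show thesis
    using that by (auto simp: not_less)
qed

lemma sum_reflected_pairs:
  fixes f :: "nat \<Rightarrow> 'a::comm_semiring_1"
  shows "(\<Sum>i=a..b. f i + f (a + b - i)) = 2 * (\<Sum>i=a..b. f i)"
  unfolding sum.distrib by (subst (2) sum.atLeastAtMost_rev) (simp add: add.commute mult_2)

lemma exists_replicated_reflected_pair:
  fixes f :: "nat \<Rightarrow> real"
  assumes "a \<le> b"
  obtains i where "i \<in> {a..b}"
    and "(\<Sum>x\<in>#replicate_mset d i + replicate_mset d (a + b - i). f x)
           \<le> 2 * real d * (\<Sum>k=a..b. f k) / real (b + 1 - a)"
proof -
  have "(\<Sum>i=a..b. f i + f (a + b - i)) \<le> real (card {a..b}) * (2 * (\<Sum>k=a..b. f k) / real (b + 1 - a))"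
    using assms by (simp add: sum_reflected_pairs)
  then obtain i where i: "i \<in> {a..b}" "f i + f (a + b - i) \<le> 2 * (\<Sum>k=a..b. f k) / real (b + 1 - a)"
    by (rule exists_le_of_sum_le[rotated 2]) (use assms in auto)
  then have "real d * (f i + f (a + b - i)) \<le> real d * (2 * (\<Sum>k=a..b. f k) / real (b + 1 - a))"
    by (intro mult_left_mono) auto
  then show thesis
    using i(1) by (intro that) (simp_all add: algebra_simps)
qed

text \<open>The alternatives are the \<open>\<sigma>\<close>-values of the \<open>l + 1\<close> candidates of part 4, all with
  \<open>\<Sigma> = l + 1 + h\<close>: a pair of weight \<open>s\<close> together with \<open>{i, h - i}\<close>, or the pair \<open>{i, l + 1 + h - i}\<close>.\<close>
lemma exists_pair_extension_le_avg:
  fixes f :: "nat \<Rightarrow> real"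
  assumes f0: "f 0 = 0" and l: "1 \<le> l" and h: "h \<le> l"
    and s: "real l * s \<le> 2 * (\<Sum>i=1..l. f i)"
  obtains i where "i \<in> {0..l}"
    and "(if i \<le> h then s + f i + f (h - i) else f i + f (l + 1 + h - i))
           \<le> (2 / real l + 2 * real h / (real l * (real l + 1))) * (\<Sum>i=1..l. f i)"
proof -
  define t where "t = (\<Sum>i=1..l. f i)"
  define \<phi> where "\<phi> i = (if i \<le> h then s + f i + f (h - i) else f i + f (l + 1 + h - i))" for i
  have split: "sum g {0..l} = sum g {0..h} + sum g {h + 1..l}" for g :: "nat \<Rightarrow> real"
    using sum.ub_add_nat[of 0 h g "l - h"] h by simp
  have "(\<Sum>i=0..h. \<phi> i) = real (h + 1) * s + 2 * (\<Sum>i=0..h. f i)"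
    using sum_reflected_pairs[of f 0 h] by (simp add: \<phi>_def sum.distrib add.assoc)
  moreover have "(\<Sum>i=h+1..l. \<phi> i) = 2 * (\<Sum>i=h+1..l. f i)"
    using sum_reflected_pairs[of f "h + 1" l] by (simp add: \<phi>_def add.commute)
  moreover have "(\<Sum>i=0..l. f i) = t"
    unfolding t_def using f0 by (simp add: sum.atLeast_Suc_atMost)
  ultimately have "sum \<phi> {0..l} = real (h + 1) * s + 2 * t"
    using split[of \<phi>] split[of f] by simp
  also have "\<dots> \<le> real (h + 1) * (2 * t / real l) + 2 * t"
  proof -
    have "s \<le> 2 * t / real l"
      using s l by (simp add: t_def pos_le_divide_eq mult.commute)
    then have "real (h + 1) * s \<le> real (h + 1) * (2 * t / real l)"
      by (rule mult_left_mono) simp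
    then show ?thesis
      by simp
  qed
  also have "\<dots> = real (card {0..l}) * ((2 / real l + 2 * real h / (real l * (real l + 1))) * t)"
  proof -
    have "real l * (real l + 1) \<noteq> 0" "real l \<noteq> 0"
      using l by simp_all
    then show ?thesis
      by (simp add: divide_simps) (simp add: algebra_simps)
  qed
  finally obtain i where i: "i \<in> {0..l}"
    and "\<phi> i \<le> (2 / real l + 2 * real h / (real l * (real l + 1))) * t"
    by (rule exists_le_of_sum_le[rotated 2]) auto
  then show thesis
    unfolding \<phi>_def t_def by (rule that)
qed

lemma exists_subset_card_lower_values:
  fixes g :: "'a \<Rightarrow> real"
  assumes "finite A"
  shows "H \<le> card A \<Longrightarrow> \<exists>S\<subseteq>A. card S = H \<and> (\<forall>x\<in>S. \<forall>y\<in>A - S. g x \<le> g y)"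
proof (induction H)
  case 0
  show ?case by auto
next
  case (Suc H)
  then obtain S where S: "S \<subseteq> A" "card S = H" "\<forall>x\<in>S. \<forall>y\<in>A - S. g x \<le> g y"
    by auto
  have "A - S \<noteq> {}"
    using S Suc.prems by (metis Diff_eq_empty_iff Suc_n_not_le_n subset_antisym)
  then have "Min (g ` (A - S)) \<in> g ` (A - S)"
    using assms by simp
  then obtain y where y: "y \<in> A - S" "g y = Min (g ` (A - S))"
    by auto
  then have "\<forall>z\<in>A - S. g y \<le> g z"
    using assms by simp
  then show ?case
    using S y assms by (intro exI[of _ "insert y S"]) (auto simp: finite_subset)
qed

lemma exists_subset_card_sum_le_weighted:
  fixes g w :: "'a \<Rightarrow> real"
  assumes fin: "finite A" and w: "\<And>x. x \<in> A \<Longrightarrow> 0 \<le> w x \<and> w x \<le> 1"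
    and H: "sum w A = real H"
  obtains S where "S \<subseteq> A" "card S = H" "sum g S \<le> (\<Sum>x\<in>A. w x * g x)"
proof -
  have "real H \<le> real (card A)"
    unfolding H[symmetric] using w sum_mono[of A w "\<lambda>_. 1"] by simp
  then obtain S where S: "S \<subseteq> A" "card S = H" and low: "\<forall>x\<in>S. \<forall>y\<in>A - S. g x \<le> g y"
    using exists_subset_card_lower_values[OF fin] by (metis of_nat_le_iff)
  have finS: "finite S"
    using fin S(1) by (rule finite_subset[rotated])
  define \<theta> where "\<theta> = (if S = {} then Min (g ` A) else Max (g ` S))"
  have below: "g x \<le> \<theta>" if "x \<in> S" for x
    using that finS by (auto simp: \<theta>_def)
  have above: "\<theta> \<le> g y" if "y \<in> A - S" for y
  proof (cases "S = {}")
    case True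
    then show ?thesis using that fin by (simp add: \<theta>_def)
  next
    case False
    then have "Max (g ` S) \<in> g ` S" using finS by simp
    then show ?thesis using that low False by (auto simp: \<theta>_def)
  qed
  have split: "sum f A = sum f S + sum f (A - S)" for f :: "'a \<Rightarrow> real"
    using sum.subset_diff[OF S(1) fin] by (simp add: add.commute)
  have "sum g S = (\<Sum>x\<in>S. w x * g x) + (\<Sum>x\<in>S. (1 - w x) * g x)"
    by (simp add: sum.distrib[symmetric] algebra_simps)
  also have "\<dots> \<le> (\<Sum>x\<in>S. w x * g x) + (\<Sum>x\<in>S. (1 - w x) * \<theta>)"
    using below w S(1) by (intro add_left_mono sum_mono mult_left_mono) auto
  also have "(\<Sum>x\<in>S. (1 - w x) * \<theta>) = (\<Sum>x\<in>A - S. w x * \<theta>)"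
    using split[of w] H S(2) by (simp add: sum_distrib_right[symmetric] sum_subtractf)
  also have "\<dots> \<le> (\<Sum>x\<in>A - S. w x * g x)"
    using above w by (intro sum_mono mult_left_mono) auto
  finally have "sum g S \<le> (\<Sum>x\<in>A. w x * g x)"
    using split[of "\<lambda>x. w x * g x"] by simp
  with S show thesis by (rule that)
qed

lemma exists_subset_card_sum_le_weighted_support:
  fixes g w :: "'a \<Rightarrow> real"
  assumes fin: "finite A" and w: "\<And>x. x \<in> A \<Longrightarrow> 0 \<le> w x \<and> w x \<le> 1"
    and H: "sum w A = real H"
  obtains S where "S \<subseteq> {x\<in>A. 0 < w x}" "card S = H" "sum g S \<le> (\<Sum>x\<in>A. w x * g x)"
proof -
  let ?A = "{x\<in>A. 0 < w x}"
  have drop_zeros: "(\<Sum>x\<in>?A. w x * f x) = (\<Sum>x\<in>A. w x * f x)" for f :: "'a \<Rightarrow> real"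
    using fin w by (intro sum.mono_neutral_left) (auto simp: order.order_iff_strict)
  have "sum w ?A = real H"
    using drop_zeros[of "\<lambda>_. 1"] H by simp
  then obtain S where "S \<subseteq> ?A" "card S = H" "sum g S \<le> (\<Sum>x\<in>?A. w x * g x)"
    using exists_subset_card_sum_le_weighted[of ?A w H g] fin w by auto
  then show thesis using drop_zeros that by simp
qed

lemma summation_by_parts:
  fixes f :: "nat \<Rightarrow> 'a::comm_ring_1"
  assumes "f 0 = 0" and "\<And>m. 1 \<le> m \<Longrightarrow> m \<le> L \<Longrightarrow> N (Suc m) \<le> N m"
  shows "(\<Sum>m=1..L. of_nat (N m - N (Suc m)) * f m)
    = (\<Sum>m=1..L. (f m - f (m - 1)) * of_nat (N m)) - f L * of_nat (N (Suc L))"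
  using assms(2)
proof (induction L)
  case 0
  then show ?case using assms(1) by simp
next
  case (Suc L)
  then have "N (Suc (Suc L)) \<le> N (Suc L)" by simp
  with Suc show ?case by (simp add: algebra_simps)
qed

text \<open>For \<open>N\<close> antitone on \<open>{1..L+1}\<close> with \<open>N (L+1) = 0\<close>, this is the multiset over \<open>{1..L}\<close>
  having exactly \<open>N m\<close> elements \<open>\<ge> m\<close>.\<close>
definition profile_mset :: "nat \<Rightarrow> (nat \<Rightarrow> nat) \<Rightarrow> nat multiset" where
  "profile_mset L N = (\<Sum>m\<in>{1..L}. replicate_mset (N m - N (Suc m)) m)"

lemma set_mset_profile_mset: "set_mset (profile_mset L N) \<subseteq> {1..L}"
  unfolding profile_mset_def by (subst set_mset_sum) auto

lemma sum_mset_profile_mset: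
  fixes f :: "nat \<Rightarrow> 'a::comm_ring_1"
  assumes "f 0 = 0" and "\<And>m. 1 \<le> m \<Longrightarrow> m \<le> L \<Longrightarrow> N (Suc m) \<le> N m" and "N (Suc L) = 0"
  shows "(\<Sum>x\<in>#profile_mset L N. f x) = (\<Sum>m=1..L. (f m - f (m - 1)) * of_nat (N m))"
proof -
  have "(\<Sum>x\<in>#profile_mset L N. f x) = (\<Sum>m=1..L. of_nat (N m - N (Suc m)) * f m)"
    unfolding profile_mset_def by (induction L) auto
  also have "\<dots> = (\<Sum>m=1..L. (f m - f (m - 1)) * of_nat (N m))"
    using summation_by_parts[of f L N] assms by simp
  finally show ?thesis .
qed

lemma size_profile_mset:
  assumes "1 \<le> L" and "\<And>m. 1 \<le> m \<Longrightarrow> m \<le> L \<Longrightarrow> N (Suc m) \<le> N m" and "N (Suc L) = 0"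
  shows "size (profile_mset L N) = N 1"
proof -
  define f :: "nat \<Rightarrow> int" where "f x = (if x = 0 then 0 else 1)" for x
  have "(\<Sum>x\<in>#profile_mset L N. f x) = (\<Sum>x\<in>#profile_mset L N. 1)"
    using set_mset_profile_mset[of L N] unfolding f_def
    by (intro arg_cong[of _ _ sum_mset] image_mset_cong) auto
  then have "int (size (profile_mset L N)) = (\<Sum>x\<in>#profile_mset L N. f x)"
    by simp
  also have "\<dots> = (\<Sum>m=1..L. (f m - f (m - 1)) * int (N m))"
    using assms by (intro sum_mset_profile_mset) (auto simp: f_def)
  also have "\<dots> = (\<Sum>m=1..L. if m = 1 then int (N m) else 0)"
    by (intro sum.cong) (auto simp: f_def)
  also have "\<dots> = int (N 1)"
    using assms(1) by simp
  finally show ?thesis by simp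
qed

lemma exists_rounded_profile_mset:
  fixes a w :: "nat \<Rightarrow> real" and base :: "nat \<Rightarrow> nat"
  assumes a0: "a 0 = 0" and L: "1 \<le> L"
    and base: "\<And>m. 1 \<le> m \<Longrightarrow> m < L \<Longrightarrow> base (Suc m) < base m"
    and w: "\<And>m. m \<in> {1..L} \<Longrightarrow> 0 \<le> w m \<and> w m \<le> 1"
    and H: "(\<Sum>m=1..L. w m) = real H"
  obtains I where "set_mset I \<subseteq> {1..L}"
    and "real (sum_mset I) = (\<Sum>m=1..L. real (base m) + w m)"
    and "(\<Sum>x\<in>#I. a x) \<le> (\<Sum>m=1..L. (a m - a (m - 1)) * (real (base m) + w m))"
    and "size I = base 1 \<or> size I = base 1 + 1 \<and> 0 < w 1"
proof -
  define g where "g m = a m - a (m - 1)" for m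
  obtain S where S: "S \<subseteq> {m\<in>{1..L}. 0 < w m}" "card S = H" "sum g S \<le> (\<Sum>m=1..L. w m * g m)"
    using exists_subset_card_sum_le_weighted_support[of "{1..L}" w H g] w H by auto
  define N where "N m = (if m \<in> {1..L} then base m + (if m \<in> S then 1 else 0) else 0)" for m
  have anti: "N (Suc m) \<le> N m" if "1 \<le> m" "m \<le> L" for m
    using that base[of m] by (cases "Suc m \<le> L") (auto simp: N_def)
  have top: "N (Suc L) = 0"
    by (simp add: N_def)
  define I where "I = profile_mset L N"
  have sum_I: "(\<Sum>x\<in>#I. f x) = (\<Sum>m=1..L. (f m - f (m - 1)) * real (base m)) + (\<Sum>m\<in>S. f m - f (m - 1))"
    if "f 0 = 0" for f :: "nat \<Rightarrow> real"
  proof -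
    have "(\<Sum>x\<in>#I. f x) = (\<Sum>m=1..L. (f m - f (m - 1)) * real (N m))"
      unfolding I_def using that anti top by (rule sum_mset_profile_mset)
    also have "\<dots> = (\<Sum>m=1..L. (f m - f (m - 1)) * real (base m) + (if m \<in> S then f m - f (m - 1) else 0))"
      by (intro sum.cong) (auto simp: N_def algebra_simps)
    also have "\<dots> = (\<Sum>m=1..L. (f m - f (m - 1)) * real (base m)) + (\<Sum>m\<in>S. f m - f (m - 1))"
      using S(1) by (simp add: sum.distrib sum.inter_restrict[symmetric] Int_absorb1 subset_iff)
    finally show ?thesis .
  qed
  show thesis
  proof
    show "set_mset I \<subseteq> {1..L}"
      unfolding I_def by (rule set_mset_profile_mset)
    have "(\<Sum>m\<in>S. real m - real (m - 1)) = (\<Sum>m\<in>S. 1)"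
      using S(1) by (intro sum.cong) auto
    then show "real (sum_mset I) = (\<Sum>m=1..L. real (base m) + w m)"
      using sum_I[of real] S(2) H by (simp add: sum.distrib)
    have "(\<Sum>m=1..L. (a m - a (m - 1)) * (real (base m) + w m))
        = (\<Sum>m=1..L. (a m - a (m - 1)) * real (base m)) + (\<Sum>m=1..L. w m * g m)"
      by (simp add: g_def distrib_left distrib_right sum.distrib mult.commute)
    then show "(\<Sum>x\<in>#I. a x) \<le> (\<Sum>m=1..L. (a m - a (m - 1)) * (real (base m) + w m))"
      using sum_I[of a, OF a0] S(3) by (simp add: g_def)
    have "size I = N 1"
      unfolding I_def using L anti top by (rule size_profile_mset)
    then show "size I = base 1 \<or> size I = base 1 + 1 \<and> 0 < w 1"
      using L S(1) by (auto simp: N_def)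
  qed
qed

text \<open>The weight of element \<open>i\<close> in \<open>\<sigma>(I,\<ell>)\<close>, except that \<open>0\<close> gets weight \<open>0\<close> instead of
  \<open>bt \<beta> (n - l)\<close>, so that summation by parts applies to it.\<close>
definition cost :: "(nat \<Rightarrow> real) \<Rightarrow> nat \<Rightarrow> nat \<Rightarrow> nat \<Rightarrow> real" where
  "cost \<beta> n l i = (if i = 0 then 0 else bt \<beta> (n - l + i))"

lemma sigma_l_eq_sum_cost:
  assumes "0 \<notin># I"
  shows "sigma_l \<beta> n I l = (\<Sum>i\<in>#I. cost \<beta> n l i)"
proof -
  have "image_mset (\<lambda>i. bt \<beta> (n - l + i)) I = image_mset (cost \<beta> n l) I"
    using assms by (intro image_mset_cong) (auto simp: cost_def)
  then show ?thesis
    unfolding sigma_l_def by simp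
qed

lemma sigma_l_filter_nonzero: "sigma_l \<beta> n (filter_mset (\<lambda>i. i \<noteq> 0) I) l = (\<Sum>i\<in>#I. cost \<beta> n l i)"
  unfolding sigma_l_def cost_def by (induction I) auto

lemma Sig_filter_nonzero: "Sig (filter_mset (\<lambda>i. i \<noteq> 0) I) = Sig I"
  unfolding Sig_def by (induction I) auto

lemma tl_sum_eq_sum_cost: "tl_sum \<beta> n l = (\<Sum>i=1..l. cost \<beta> n l i)"
  unfolding tl_sum_def cost_def by simp

lemma tl_sum_by_parts:
  "tl_sum \<beta> n l = (\<Sum>m=1..l. (cost \<beta> n l m - cost \<beta> n l (m - 1)) * real (l + 1 - m))"
proof -
  have "tl_sum \<beta> n l = (\<Sum>m=1..l. real ((l + 1 - m) - (l + 1 - Suc m)) * cost \<beta> n l m)"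
    unfolding tl_sum_eq_sum_cost by (intro sum.cong) auto
  also have "\<dots> = (\<Sum>m=1..l. (cost \<beta> n l m - cost \<beta> n l (m - 1)) * real (l + 1 - m))"
    using summation_by_parts[of "cost \<beta> n l" l "\<lambda>m. l + 1 - m"] by (simp add: cost_def)
  finally show ?thesis .
qed

lemma sum_reversed_atLeastAtMost: "(\<Sum>m=1..l. real (l + 1 - m)) = real l * (real l + 1) / 2"
proof -
  have "(\<Sum>m=1..l. real (l + 1 - m)) = (\<Sum>m=1..l. real m)"
    by (subst sum.atLeastAtMost_rev) simp
  then show ?thesis
    using double_gauss_sum_from_Suc_0[of l, where ?'a = real] by simp
qed

lemma sigma_l_add: "sigma_l \<beta> n (I + J) l = sigma_l \<beta> n I l + sigma_l \<beta> n J l"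
  unfolding sigma_l_def by simp

lemma Sig_add: "Sig (I + J) = Sig I + Sig J"
  unfolding Sig_def by simp

lemma is_lqset_add:
  assumes "is_lqset \<beta> n l q I" and "is_lqset \<beta> n l q' J"
  shows "is_lqset \<beta> n l (q + q') (I + J)"
  using assms unfolding is_lqset_def is_lset_def Sig_add sigma_l_add
  by (simp add: distrib_right)

lemma is_lqset_pair:
  assumes "i \<in> {1..l}" "j \<in> {1..l}"
    and "q * real l * (real l + 1) / 2 \<le> real (i + j)"
    and "cost \<beta> n l i + cost \<beta> n l j \<le> q * tl_sum \<beta> n l"
  shows "is_lqset \<beta> n l q {#i, j#}"
  using assms unfolding is_lqset_def is_lset_def Sig_def by (simp add: sigma_l_eq_sum_cost)

lemma exists_lqset_pairs:
  assumes "1 \<le> l"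
  shows "\<exists>I. is_lqset \<beta> n l (2 * real d / real l) I \<and> size I = 2 * d"
proof -
  obtain i where i: "i \<in> {1..l}"
    and "(\<Sum>x\<in>#replicate_mset d i + replicate_mset d (1 + l - i). bt \<beta> (n - l + x))
           \<le> 2 * real d * (\<Sum>k=1..l. bt \<beta> (n - l + k)) / real (l + 1 - 1)"
    using assms by (rule exists_replicated_reflected_pair)
  moreover define I where "I = replicate_mset d i + replicate_mset d (1 + l - i)"
  ultimately have "sigma_l \<beta> n I l \<le> 2 * real d / real l * tl_sum \<beta> n l"
    unfolding sigma_l_def tl_sum_def by simp
  moreover have "Sig I = d * (l + 1)"
    using i unfolding I_def Sig_def by (simp add: add_mult_distrib2[symmetric])
  moreover have "is_lset l I"
    using i unfolding is_lset_def I_def by auto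
  ultimately have "is_lqset \<beta> n l (2 * real d / real l) I"
    using assms unfolding is_lqset_def by (simp add: algebra_simps)
  then show ?thesis
    by (intro exI[of _ I]) (simp add: I_def)
qed

lemma exists_lset_pairs_tl_sum_Suc:
  assumes "l + 1 \<le> n"
  shows "\<exists>I. is_lset l I \<and> size I = 2 * d \<and> real (Sig I) \<ge> real l * real d
           \<and> sigma_l \<beta> n I l \<le> 2 * real d * tl_sum \<beta> n (l + 1) / (real l + 1)"
proof -
  have "tl_sum \<beta> n (l + 1) = (\<Sum>i=0..l. bt \<beta> (n - (l + 1) + Suc i))"
    unfolding tl_sum_def using sum.shift_bounds_cl_Suc_ivl[of "\<lambda>i. bt \<beta> (n - (l + 1) + i)" 0 l]
    by simp
  also have "\<dots> = (\<Sum>i=0..l. bt \<beta> (n - l + i))"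
    using assms by (intro sum.cong refl arg_cong[of _ _ "bt \<beta>"]) linarith
  finally have tl: "tl_sum \<beta> n (l + 1) = (\<Sum>i=0..l. bt \<beta> (n - l + i))" .
  obtain i where i: "i \<in> {0..l}"
    and "(\<Sum>x\<in>#replicate_mset d i + replicate_mset d (0 + l - i). bt \<beta> (n - l + x))
           \<le> 2 * real d * (\<Sum>k=0..l. bt \<beta> (n - l + k)) / real (l + 1 - 0)"
    by (rule exists_replicated_reflected_pair[OF zero_le])
  moreover define I where "I = replicate_mset d i + replicate_mset d (l - i)"
  ultimately have "sigma_l \<beta> n I l \<le> 2 * real d * tl_sum \<beta> n (l + 1) / (real l + 1)"
    unfolding sigma_l_def tl by (simp add: add.commute)
  moreover have "Sig I = d * l"
    using i unfolding I_def Sig_def by (simp add: add_mult_distrib2[symmetric])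
  moreover have "is_lset l I"
    using i unfolding is_lset_def I_def by auto
  ultimately show ?thesis
    by (intro exI[of _ I]) (simp add: I_def)
qed

lemma exists_lqset_rounded_profile:
  fixes w :: "nat \<Rightarrow> real" and base :: "nat \<Rightarrow> nat"
  assumes l: "1 \<le> l"
    and base: "\<And>m. 1 \<le> m \<Longrightarrow> m < l \<Longrightarrow> base (Suc m) < base m"
    and w: "\<And>m. m \<in> {1..l} \<Longrightarrow> 0 \<le> w m \<and> w m \<le> 1"
    and H: "(\<Sum>m=1..l. w m) = real H"
    and profile: "\<And>m. m \<in> {1..l} \<Longrightarrow> real (base m) + w m = q * real (l + 1 - m)"
  obtains I where "is_lqset \<beta> n l q I" and "size I = base 1 \<or> size I = base 1 + 1 \<and> 0 < w 1"
proof -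
  have "cost \<beta> n l 0 = 0"
    by (simp add: cost_def)
  then obtain I where I: "set_mset I \<subseteq> {1..l}"
      "real (sum_mset I) = (\<Sum>m=1..l. real (base m) + w m)"
      "(\<Sum>x\<in>#I. cost \<beta> n l x) \<le> (\<Sum>m=1..l. (cost \<beta> n l m - cost \<beta> n l (m - 1)) * (real (base m) + w m))"
      "size I = base 1 \<or> size I = base 1 + 1 \<and> 0 < w 1"
    using l base w H by (rule exists_rounded_profile_mset)
  have "real (Sig I) = (\<Sum>m=1..l. q * real (l + 1 - m))"
    unfolding Sig_def I(2) using profile by (intro sum.cong) auto
  also have "\<dots> = q * real l * (real l + 1) / 2"
    unfolding sum_distrib_left[symmetric] sum_reversed_atLeastAtMost by simp
  finally have Sig: "real (Sig I) = q * real l * (real l + 1) / 2" .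
  have "0 \<notin># I"
    using I(1) by auto
  then have "sigma_l \<beta> n I l \<le> (\<Sum>m=1..l. (cost \<beta> n l m - cost \<beta> n l (m - 1)) * (q * real (l + 1 - m)))"
    using I(3) profile by (simp add: sigma_l_eq_sum_cost)
  also have "\<dots> = q * tl_sum \<beta> n l"
    unfolding tl_sum_by_parts sum_distrib_left by (intro sum.cong) auto
  finally have "sigma_l \<beta> n I l \<le> q * tl_sum \<beta> n l" .
  with I(1) Sig have "is_lqset \<beta> n l q I"
    unfolding is_lqset_def is_lset_def by auto
  then show thesis using I(4) by (rule that)
qed

lemma exists_lqset_below_one:
  assumes l: "1 \<le> l" and h: "real h \<le> (real l + 1) / 2"
  shows "\<exists>I. is_lqset \<beta> n l (1 - 2 * real h / (real l * (real l + 1))) I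
           \<and> l - 1 \<le> size I \<and> size I \<le> l"
proof -
  define c where "c = 2 * real h / (real l * (real l + 1))"
  have c_sum: "c * (real l * (real l + 1) / 2) = real h"
    using l by (simp add: c_def)
  have c_nonneg: "0 \<le> c"
    by (simp add: c_def)
  have "c * real l = 2 * real h / (real l + 1)"
    using l by (simp add: c_def)
  also have "\<dots> \<le> 1"
    using h by (simp add: pos_divide_le_eq)
  finally have "c * real l \<le> 1" .
  have w: "0 \<le> 1 - c * real (l + 1 - m) \<and> 1 - c * real (l + 1 - m) \<le> 1" if "m \<in> {1..l}" for m
  proof -
    have "c * real (l + 1 - m) \<le> c * real l"
      using that c_nonneg by (intro mult_left_mono) auto
    moreover have "0 \<le> c * real (l + 1 - m)"
      using c_nonneg by simp
    ultimately show ?thesis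
      using \<open>c * real l \<le> 1\<close> by linarith
  qed
  have "1 \<le> real l"
    using l by simp
  then have "h \<le> l"
    using h by (simp flip: of_nat_le_iff)
  then have H: "(\<Sum>m=1..l. 1 - c * real (l + 1 - m)) = real (l - h)"
    unfolding sum_subtractf sum_distrib_left[symmetric] sum_reversed_atLeastAtMost c_sum by simp
  have profile: "real (l - m) + (1 - c * real (l + 1 - m)) = (1 - c) * real (l + 1 - m)"
    if "m \<in> {1..l}" for m
    using that by (simp add: algebra_simps)
  have base: "l - Suc m < l - m" if "1 \<le> m" "m < l" for m
    using that by simp
  obtain I where I: "is_lqset \<beta> n l (1 - c) I"
    and "size I = l - 1 \<or> size I = l - 1 + 1 \<and> 0 < 1 - c * real (l + 1 - 1)"
    using exists_lqset_rounded_profile[OF l base w H profile] by blast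
  then have "size I = l - 1 \<or> size I = l"
    using l by auto
  with I show ?thesis
    unfolding c_def by auto
qed

lemma exists_lqset_above_integer:
  assumes l: "1 \<le> l" and k: "1 \<le> k"
  shows "\<exists>I. is_lqset \<beta> n l (real k + 2 * real h / (real l * (real l + 1))) I
           \<and> int (k * l) + \<lfloor>2 * real h / (real l + 1)\<rfloor> \<le> int (size I)
           \<and> int (size I) \<le> int (k * l) + \<lceil>2 * real h / (real l + 1)\<rceil>"
proof -
  define c where "c = 2 * real h / (real l * (real l + 1))"
  define p where "p m = c * real (l + 1 - m)" for m
  define base where "base m = k * (l + 1 - m) + nat \<lfloor>p m\<rfloor>" for m
  define F where "F = (\<Sum>m=1..l. nat \<lfloor>p m\<rfloor>)"
  have p_nonneg: "0 \<le> p m" for m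
    by (simp add: p_def c_def)
  have p_split: "real (nat \<lfloor>p m\<rfloor>) + frac (p m) = p m" for m
    using p_nonneg[of m] by (simp add: frac_def)
  have "p (Suc m) \<le> p m" for m
    unfolding p_def c_def by (intro mult_left_mono) auto
  then have floor_mono': "nat \<lfloor>p (Suc m)\<rfloor> \<le> nat \<lfloor>p m\<rfloor>" for m
    by (intro nat_mono floor_mono)
  have k_step: "k * (l + 1 - Suc m) + k = k * (l + 1 - m)" if "m < l" for m
  proof -
    have "l + 1 - m = Suc (l + 1 - Suc m)"
      using that by simp
    then show ?thesis by simp
  qed
  have base: "base (Suc m) < base m" if "1 \<le> m" "m < l" for m
    unfolding base_def using floor_mono'[of m] k_step[OF that(2)] k by linarith
  have w: "0 \<le> frac (p m) \<and> frac (p m) \<le> 1" for m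
    using frac_lt_1[of "p m"] by simp
  have "(\<Sum>m=1..l. p m) = real h"
    unfolding p_def sum_distrib_left[symmetric] sum_reversed_atLeastAtMost c_def using l by simp
  moreover have "frac (p m) = p m - real (nat \<lfloor>p m\<rfloor>)" for m
    using p_split[of m] by simp
  ultimately have sum_frac: "(\<Sum>m=1..l. frac (p m)) = real h - real F"
    unfolding F_def of_nat_sum by (simp add: sum_subtractf)
  moreover have "0 \<le> (\<Sum>m=1..l. frac (p m))"
    by (simp add: sum_nonneg)
  ultimately have H: "(\<Sum>m=1..l. frac (p m)) = real (h - F)"
    by simp
  have profile: "real (base m) + frac (p m) = (real k + c) * real (l + 1 - m)" for m
  proof -
    have "real (base m) + frac (p m) = real k * real (l + 1 - m) + (real (nat \<lfloor>p m\<rfloor>) + frac (p m))"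
      unfolding base_def of_nat_add of_nat_mult add.assoc ..
    also have "\<dots> = (real k + c) * real (l + 1 - m)"
      unfolding p_split by (simp only: p_def distrib_right)
    finally show ?thesis .
  qed
  obtain I where I: "is_lqset \<beta> n l (real k + c) I"
    and size: "size I = base 1 \<or> size I = base 1 + 1 \<and> 0 < frac (p 1)"
    using exists_lqset_rounded_profile[OF l base w H profile] by blast
  have p1: "p 1 = 2 * real h / (real l + 1)"
    using l by (simp add: p_def c_def)
  have base1: "int (base 1) = int (k * l) + \<lfloor>p 1\<rfloor>"
    using p_nonneg[of 1] by (simp add: base_def)
  have "\<lceil>p 1\<rceil> = \<lfloor>p 1\<rfloor> + 1" if "0 < frac (p 1)"
    using that by (simp add: ceiling_altdef frac_def)
  then have "int (k * l) + \<lfloor>p 1\<rfloor> \<le> int (size I) \<and> int (size I) \<le> int (k * l) + \<lceil>p 1\<rceil>"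
    using size base1 floor_le_ceiling[of "p 1"] by (elim disjE conjE) simp_all
  with I show ?thesis
    unfolding p1 c_def by blast
qed

lemma exists_lqset_pair_extension:
  assumes l: "1 \<le> l" and h: "h \<le> l"
  shows "\<exists>E. is_lqset \<beta> n l (2 / real l + 2 * real h / (real l * (real l + 1))) E \<and> size E \<le> 4"
proof -
  define q where "q = 2 / real l + 2 * real h / (real l * (real l + 1))"
  have Sig_q: "q * real l * (real l + 1) / 2 = real (l + 1 + h)"
  proof -
    have "real l * (real l + 1) \<noteq> 0" "real l \<noteq> 0"
      using l by simp_all
    then show ?thesis
      unfolding q_def by (simp add: divide_simps)
  qed
  obtain P where P: "is_lqset \<beta> n l (2 / real l) P" "size P = 2"
    using exists_lqset_pairs[OF l, of \<beta> n 1] by auto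
  have Sig_P: "real (Sig P) \<ge> real l + 1"
    using P(1) l unfolding is_lqset_def by simp
  have cost0: "cost \<beta> n l 0 = 0"
    by (simp add: cost_def)
  have "real l * sigma_l \<beta> n P l \<le> 2 * (\<Sum>i=1..l. cost \<beta> n l i)"
    using P(1) l unfolding is_lqset_def tl_sum_eq_sum_cost by (simp add: field_simps)
  then obtain i where i: "i \<in> {0..l}"
    and le: "(if i \<le> h then sigma_l \<beta> n P l + cost \<beta> n l i + cost \<beta> n l (h - i)
              else cost \<beta> n l i + cost \<beta> n l (l + 1 + h - i)) \<le> q * tl_sum \<beta> n l"
    using exists_pair_extension_le_avg[of "cost \<beta> n l", OF cost0 l h] unfolding q_def tl_sum_eq_sum_cost
    by blast
  show ?thesis
  proof (cases "i \<le> h")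
    case True
    define E where "E = P + filter_mset (\<lambda>x. x \<noteq> 0) {#i, h - i#}"
    have "Sig E = Sig P + h"
      using True unfolding E_def Sig_add Sig_filter_nonzero by (simp add: Sig_def)
    then have "real (Sig E) \<ge> q * real l * (real l + 1) / 2"
      using Sig_P unfolding Sig_q by simp
    moreover have "sigma_l \<beta> n E l \<le> q * tl_sum \<beta> n l"
      using le True unfolding E_def sigma_l_add sigma_l_filter_nonzero by (simp add: add.assoc)
    moreover have "is_lset l E"
      using P(1) True h unfolding E_def is_lqset_def is_lset_def by auto
    moreover have "size E \<le> 4"
      using P(2) size_filter_mset_lesseq[of "\<lambda>x. x \<noteq> 0" "{#i, h - i#}"] unfolding E_def by simp
    ultimately show ?thesis
      unfolding q_def is_lqset_def by blast
  next
    case False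
    then have "is_lqset \<beta> n l q {#i, l + 1 + h - i#}"
      using i le by (intro is_lqset_pair) (auto simp: Sig_q)
    then show ?thesis
      unfolding q_def by (intro exI[of _ "{#i, l + 1 + h - i#}"]) simp
  qed
qed

lemma exists_lqset_pairs_extended:
  assumes l: "1 \<le> l" and d: "1 \<le> d" and h: "h \<le> l"
  shows "\<exists>I. is_lqset \<beta> n l (2 * real d / real l + 2 * real h / (real l * (real l + 1))) I
           \<and> size I \<le> 2 * d + 2"
proof -
  obtain I where I: "is_lqset \<beta> n l (2 * real (d - 1) / real l) I" "size I = 2 * (d - 1)"
    using exists_lqset_pairs[OF l] by blast
  obtain E where E: "is_lqset \<beta> n l (2 / real l + 2 * real h / (real l * (real l + 1))) E" "size E \<le> 4"
    using exists_lqset_pair_extension[OF l h] by blast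
  have q: "2 * real (d - 1) / real l + (2 / real l + 2 * real h / (real l * (real l + 1)))
      = 2 * real d / real l + 2 * real h / (real l * (real l + 1))"
    using d by (simp add: add_divide_distrib[symmetric] algebra_simps)
  have "is_lqset \<beta> n l (2 * real d / real l + 2 * real h / (real l * (real l + 1))) (I + E)"
    using is_lqset_add[OF I(1) E(1)] unfolding q .
  moreover have "size (I + E) \<le> 2 * d + 2"
    using I(2) E(2) d by simp
  ultimately show ?thesis
    by blast
qed

theorem lemma3:
  fixes \<beta> :: "nat \<Rightarrow> real" and n l :: nat
  assumes nonneg: "0 \<le> \<beta> 1"
    and mono: "\<And>i j. 1 \<le> i \<Longrightarrow> i \<le> j \<Longrightarrow> j \<le> n \<Longrightarrow> \<beta> i \<le> \<beta> j"
    and l: "1 \<le> l" "l \<le> n"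
  shows
    "(\<forall>d::nat. \<exists>I. is_lqset \<beta> n l (2 * real d / real l) I \<and> size I = 2 * d)
     \<and> (\<forall>h::nat. real h \<le> (real l + 1) / 2 \<longrightarrow>
          (\<exists>I. is_lqset \<beta> n l (1 - 2 * real h / (real l * (real l + 1))) I
               \<and> l - 1 \<le> size I \<and> size I \<le> l))
     \<and> (\<forall>k::nat. \<forall>h::nat. 1 \<le> k \<longrightarrow> h \<le> l \<longrightarrow>
          (\<exists>I. is_lqset \<beta> n l (real k + 2 * real h / (real l * (real l + 1))) I
               \<and> int (k * l) + \<lfloor>2 * real h / (real l + 1)\<rfloor> \<le> int (size I)
               \<and> int (size I) \<le> int (k * l) + \<lceil>2 * real h / (real l + 1)\<rceil>))
     \<and> (\<forall>d::nat. \<forall>h::nat. 1 \<le> d \<longrightarrow> h \<le> l \<longrightarrow>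
          (\<exists>I. is_lqset \<beta> n l (2 * real d / real l + 2 * real h / (real l * (real l + 1))) I
               \<and> size I \<le> 2 * d + 2))
     \<and> (l \<le> n - 1 \<longrightarrow> (\<forall>d::nat. \<exists>I. is_lset l I \<and> size I = 2 * d
               \<and> real (Sig I) \<ge> real l * real d
               \<and> sigma_l \<beta> n I l \<le> 2 * real d * tl_sum \<beta> n (l + 1) / (real l + 1)))"
proof -
  have "l + 1 \<le> n" if "l \<le> n - 1"
    using that l(1) by arith
  then show ?thesis
    using exists_lqset_pairs[OF l(1)] exists_lqset_below_one[OF l(1)]
      exists_lqset_above_integer[OF l(1)] exists_lqset_pairs_extended[OF l(1)]
      exists_lset_pairs_tl_sum_Suc
    by blast
qed

end
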